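(* Consider the full-information matching model described in the context. The aggressive capacity reservation (ACR) policy $\pi^{\mathrm{ACR}}$ achieves the highest long-run throughput among all policies in the admissible class $\Pi$, i.e. $\mathrm{TP}(\pi^{\mathrm{ACR}}) = \sup_{\pi\in\Pi}\mathrm{TP}(\pi)$.
   Context: Job/agent types are $\mathcal{L}=\{0,1,\dots,\ell\}$. Agents of type $i$ arrive according to a Poisson process of rate $\lambda_i>0$ and jobs of type $j$ according to a Poisson process of rate $\mu_j>0$, all processes independent. A type $0$ ("flexible") agent can fulfill jobs of every type; a type $i\ge 1$ ("specialized") agent can fulfill only type $i$ jobs. A job that is not matched at its arrival instant is lost. Each waiting agent has an independent exponential patience with rate $\theta>0$ and abandons when it expires; a matched agent leaves. The state is $A=(A_0,\dots,A_\ell)\in\mathbb{Z}_{\ge0}^{\ell+1}$, the numbers of waiting agents of each type. A policy is a map $\pi:\mathbb{Z}_{\ge0}^{\ell+1}\times\mathcal{L}\to[0,1]^{\ell+2}$, where $\pi_i(A,j)$ ($i\in\{0,\dots,\ell\}$) is the probability an arriving type $j$ job is assigned to a (uniformly random) waiting agent of type $i$ and $\pi_{-1}(A,j)$ the probability the job is rejected; the admissible class $\Pi$ consists of those $\pi$ with $\sum_{i\in\{-1,0,\dots,\ell\}}\pi_i(A,j)=1$, $\pi_i(A,j)=0$ whenever $A_i=0$, and $\pi_i(A,j)=0$ for $i\notin\{0,j\}$ (idling allowed). Let $M^\pi(T)$ be the number of matches in $[0,T]$ and $\mathrm{TP}(\pi)=\limsup_{T\to\infty}\frac1T\mathbb{E}[M^\pi(T)\mid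 A^{(0)}=A]$. The ACR policy assigns a type $j$ job to a type $j$ agent if one is present, otherwise to a type $0$ agent if one is present (otherwise the job is lost); in particular type $0$ jobs go to type $0$ agents. *)

theory Defs
  imports "HOL-Probability.Probability"
begin

(* Types are 0..l.  A state is a list A of length l+1, A!i = number of waiting
   type-i agents.  A policy pi A j i is the probability that an arriving type-j job
   is assigned to a type-i agent (i = 0..l) or rejected (i = -1). *)

type_synonym state = "nat list"
type_synonym policy = "nat list \<Rightarrow> nat \<Rightarrow> int \<Rightarrow> real"

definition admissible :: "nat \<Rightarrow> policy set" where
  "admissible l = {p. \<forall>A j. length A = Suc l \<longrightarrow> j \<le> l \<longrightarrow>
      (\<forall>i\<in>{- 1 .. int l}. 0 \<le> p A j i) \<and>
      (\<Sum>i\<in>{- 1 .. int l}. p A j i) = 1 \<and>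
      (\<forall>i\<le>l. A ! i = 0 \<longrightarrow> p A j (int i) = 0) \<and>
      (\<forall>i\<le>l. i \<noteq> 0 \<and> i \<noteq> j \<longrightarrow> p A j (int i) = 0)}"

definition acr :: policy where
  "acr A j i = (if 0 < A ! j then (if i = int j then 1 else 0)
                else if 0 < A ! 0 then (if i = 0 then 1 else 0)
                else (if i = -1 then 1 else 0))"

definition total_rate :: "nat \<Rightarrow> (nat \<Rightarrow> real) \<Rightarrow> (nat \<Rightarrow> real) \<Rightarrow> real \<Rightarrow> state \<Rightarrow> real" where
  "total_rate l lam mu \<theta> A = (\<Sum>i\<le>l. lam i) + (\<Sum>j\<le>l. mu j) + \<theta> * (\<Sum>i\<le>l. real (A ! i))"

(* list of possible events: (rate, next state, is the event a match?) *)
definition events :: "nat \<Rightarrow> (nat \<Rightarrow> real) \<Rightarrow> (nat \<Rightarrow> real) \<Rightarrow> real \<Rightarrow> policy \<Rightarrow> state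
    \<Rightarrow> (real \<times> state \<times> bool) list" where
  "events l lam mu \<theta> p A =
     [(lam i, A[i := A ! i + 1], False). i \<leftarrow> [0..<Suc l]]             \<comment> \<open>agent arrival\<close>
   @ [(\<theta> * real (A ! i), A[i := A ! i - 1], False). i \<leftarrow> [0..<Suc l]]  \<comment> \<open>abandonment\<close>
   @ [(mu j * p A j (int i), A[i := A ! i - 1], True). j \<leftarrow> [0..<Suc l], i \<leftarrow> [0..<Suc l]] \<comment> \<open>match\<close>
   @ [(mu j * p A j (-1), A, False). j \<leftarrow> [0..<Suc l]]"

definition jump_dist :: "nat \<Rightarrow> (nat \<Rightarrow> real) \<Rightarrow> (nat \<Rightarrow> real) \<Rightarrow> real \<Rightarrow> policy \<Rightarrow> state
    \<Rightarrow> (state \<times> bool) measure" where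
  "jump_dist l lam mu \<theta> p A = density (count_space UNIV)
     (\<lambda>x. ennreal (\<Sum>e\<leftarrow>events l lam mu \<theta> p A.
            if snd e = x then fst e / total_rate l lam mu \<theta> A else 0))"

(* measurable space of (current state, current time, was last jump a match) *)
definition SP :: "(state \<times> real \<times> bool) measure" where
  "SP = count_space UNIV \<Otimes>\<^sub>M (borel \<Otimes>\<^sub>M count_space UNIV)"

definition step_kernel :: "nat \<Rightarrow> (nat \<Rightarrow> real) \<Rightarrow> (nat \<Rightarrow> real) \<Rightarrow> real \<Rightarrow> policy
    \<Rightarrow> state \<times> real \<times> bool \<Rightarrow> (state \<times> real \<times> bool) measure" where
  "step_kernel l lam mu \<theta> p s = (case s of (A, t, _) \<Rightarrow>
     bind (density lborel (exponential_density (total_rate l lam mu \<theta> A))) (\<lambda>\<tau>.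
     bind (jump_dist l lam mu \<theta> p A) (\<lambda>(B, g). return SP (B, t + \<tau>, g))))"

primrec jump_law :: "nat \<Rightarrow> (nat \<Rightarrow> real) \<Rightarrow> (nat \<Rightarrow> real) \<Rightarrow> real \<Rightarrow> policy \<Rightarrow> state
    \<Rightarrow> nat \<Rightarrow> (state \<times> real \<times> bool) measure" where
  "jump_law l lam mu \<theta> p A0 0 = return SP (A0, 0, False)"
| "jump_law l lam mu \<theta> p A0 (Suc n) =
     bind (jump_law l lam mu \<theta> p A0 n) (step_kernel l lam mu \<theta> p)"

(* E[M^pi(T) | A(0) = A0]: expected number of jumps at times <= T that are matches *)
definition expected_matches :: "nat \<Rightarrow> (nat \<Rightarrow> real) \<Rightarrow> (nat \<Rightarrow> real) \<Rightarrow> real \<Rightarrow> policy \<Rightarrow> state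
    \<Rightarrow> real \<Rightarrow> ennreal" where
  "expected_matches l lam mu \<theta> p A0 T =
     (\<Sum>n. emeasure (jump_law l lam mu \<theta> p A0 (Suc n)) {(B, t, g). g \<and> t \<le> T})"

definition throughput :: "nat \<Rightarrow> (nat \<Rightarrow> real) \<Rightarrow> (nat \<Rightarrow> real) \<Rightarrow> real \<Rightarrow> policy \<Rightarrow> state \<Rightarrow> ennreal" where
  "throughput l lam mu \<theta> p A0 =
     Limsup at_top (\<lambda>T::real. expected_matches l lam mu \<theta> p A0 T / ennreal T)"

end

theory Submission
  imports Defs
begin

(* Finite-horizon value iteration on the embedded jump chain.  The expected number
   of matches by time T among the first n jumps, from state A at time t, is the n-th iterate of
   a Bellman operator, and the throughput is obtained from these iterates by taking the supremum
   over n and the limsup in T.  By induction on n the iterates of every admissible policy are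
   dominated by those of ACR: ACR maximizes one step of the Bellman operator whenever the value
   function F satisfies
     (a) a flexible agent is worth at least a specialized one, F (C + e_j) <= F (C + e_0), and
     (b) one extra agent yields at most one extra match before T, F (C + e_i) <= F C + [t <= T];
   and both properties are preserved by the Bellman operator of ACR.  The extra agent in (b)
   also raises the abandonment rate by theta, which is matched by a fictitious self-loop of
   rate theta in C (uniformization). *)

lemma sum_list_map_upt_Suc_eq_sum_atMost:
  "(\<Sum>i\<leftarrow>[0..<Suc l]. f i) = (\<Sum>i\<le>l. f i)"
proof -
  have "set [0..<Suc l] = {..l}" by auto
  then show ?thesis by (metis sum_set_upt_conv_sum_list_nat)
qed

lemma sum_list_concat:
  fixes xss :: "'a::monoid_add list list"
  shows "sum_list (concat xss) = sum_list (map sum_list xss)"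
  by (induction xss) simp_all

lemma sum_from_minus_one_int:
  "(\<Sum>i\<in>{-1..int l}. f i) = f (-1) + (\<Sum>i\<le>l. f (int i))"
proof -
  have split: "{-1..int l} = insert (-1) (int ` {0..l})"
    by (auto simp: image_int_atLeastAtMost)
  have "(\<Sum>i\<in>int ` {0..l}. f i) = (\<Sum>i\<le>l. f (int i))"
    by (rule sum.reindex_cong[of int]) (auto simp: inj_on_def)
  then show ?thesis unfolding split by (subst sum.insert) auto
qed

lemma nn_integral_count_space_sum_list_indicator:
  fixes c :: "'b \<Rightarrow> ennreal" and es :: "('b \<times> 'a) list"
  shows "(\<integral>\<^sup>+x. (\<Sum>e\<leftarrow>es. c (fst e) * indicator {snd e} x) * f x \<partial>count_space UNIV)
       = (\<Sum>e\<leftarrow>es. c (fst e) * f (snd e))"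
proof (induction es)
  case (Cons e es)
  have "(\<integral>\<^sup>+x. (\<Sum>e\<leftarrow>e # es. c (fst e) * indicator {snd e} x) * f x \<partial>count_space UNIV)
     = (\<integral>\<^sup>+x. (c (fst e) * f x) * indicator {snd e} x \<partial>count_space UNIV)
       + (\<integral>\<^sup>+x. (\<Sum>e\<leftarrow>es. c (fst e) * indicator {snd e} x) * f x \<partial>count_space UNIV)"
    by (subst nn_integral_add[symmetric]) (auto intro!: nn_integral_cong simp: algebra_simps)
  then show ?case using Cons by simp
qed simp

lemma emeasure_bind_not_subprob:
  assumes ne: "space M \<noteq> {}"
    and out: "\<And>x. x \<in> space M \<Longrightarrow> f x \<notin> space (subprob_algebra (f (SOME x. x \<in> space M)))"
  shows "emeasure (bind M f) X = 0"
proof -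
  define S where "S = subprob_algebra (f (SOME x. x \<in> space M))"
  define D where "D = distr M S f"
  have D0: "emeasure D A = 0" for A
  proof -
    have "f -` A \<inter> space M = {}" if "A \<in> sets S"
      using sets.sets_into_space[OF that] out unfolding S_def by blast
    then show ?thesis
      unfolding D_def distr_def emeasure_measure_of_conv by (auto simp: sets.sigma_sets_eq)
  qed
  have integral_0: "(\<integral>\<^sup>+ M'. emeasure M' B \<partial>D) = 0" for B
  proof -
    have "AE x in D. False"
      by (rule AE_I'[of "space D"]) (auto simp: null_sets_def D0)
    then show ?thesis by (subst nn_integral_cong_AE[where v="\<lambda>_. 0"]) auto
  qed
  have "emeasure (join D) X = 0"
    unfolding join_def emeasure_measure_of_conv integral_0 by (simp only: if_cancel)
  moreover have "bind M f = join D"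
    using ne by (simp only: bind_def D_def S_def if_False)
  ultimately show ?thesis by simp
qed

section \<open>Exponential holding times\<close>

definition exp_decay :: "real \<Rightarrow> real \<Rightarrow> real" where
  "exp_decay r \<tau> = (if 0 \<le> \<tau> then exp (- r * \<tau>) else 0)"

definition in_horizon :: "real \<Rightarrow> real \<Rightarrow> ennreal" where
  "in_horizon T u = (if u \<le> T then 1 else 0)"

lemma exp_decay_nonneg [simp]: "0 \<le> exp_decay r \<tau>"
  by (simp add: exp_decay_def)

lemma borel_measurable_exp_decay [measurable]: "exp_decay r \<in> borel_measurable borel"
  unfolding exp_decay_def by measurable

lemma borel_measurable_in_horizon [measurable]: "in_horizon T \<in> borel_measurable borel"
  unfolding in_horizon_def by measurable

lemma exponential_density_eq_exp_decay:
  "0 \<le> r \<Longrightarrow> exponential_density r \<tau> = r * exp_decay r \<tau>"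
  by (simp add: exponential_density_def exp_decay_def mult.commute)

lemma nn_integral_exponential_atLeastAtMost:
  assumes "0 < \<theta>" and "0 \<le> w"
  shows "(\<integral>\<^sup>+\<tau>. ennreal (\<theta> * exp (- \<theta> * \<tau>)) * indicator {0..w} \<tau> \<partial>lborel) = ennreal (1 - exp (- \<theta> * w))"
proof -
  have "((\<lambda>x. - exp (- \<theta> * x)) has_real_derivative \<theta> * exp (- \<theta> * x)) (at x within {0..w})" for x
    by (auto intro!: derivative_eq_intros)
  then have "((\<lambda>x. \<theta> * exp (- \<theta> * x)) has_integral (- exp (- \<theta> * w) - - exp (- \<theta> * 0))) {0..w}"
    by (intro fundamental_theorem_of_calculus[OF \<open>0 \<le> w\<close>]) (simp add: has_real_derivative_iff_has_vector_derivative)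
  then show ?thesis
    by (intro nn_integral_has_integral_lebesgue') (use \<open>0 < \<theta>\<close> in simp_all)
qed

lemma nn_integral_exp_decay_product:
  assumes "0 < \<theta>"
  shows "(\<integral>\<^sup>+\<tau>. ennreal (exp_decay (r + \<theta>) \<tau> * \<theta> * exp_decay r (w - \<tau>)) \<partial>lborel)
       = ennreal (exp_decay r w * (1 - exp (- \<theta> * w)))"
proof (cases "0 \<le> w")
  case True
  have pointwise: "ennreal (exp_decay (r + \<theta>) \<tau> * \<theta> * exp_decay r (w - \<tau>))
      = ennreal (exp (- r * w)) * (ennreal (\<theta> * exp (- \<theta> * \<tau>)) * indicator {0..w} \<tau>)" for \<tau>
  proof (cases "0 \<le> \<tau> \<and> \<tau> \<le> w")
    case True
    then have "exp_decay (r + \<theta>) \<tau> * \<theta> * exp_decay r (w - \<tau>) = exp (- r * w) * (\<theta> * exp (- \<theta> * \<tau>))"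
      by (simp add: exp_decay_def exp_add[symmetric] algebra_simps)
    then show ?thesis
      using True \<open>0 < \<theta>\<close> by (simp add: ennreal_mult[symmetric])
  qed (auto simp: exp_decay_def)
  have "(\<integral>\<^sup>+\<tau>. ennreal (exp_decay (r + \<theta>) \<tau> * \<theta> * exp_decay r (w - \<tau>)) \<partial>lborel)
      = ennreal (exp (- r * w)) * (\<integral>\<^sup>+\<tau>. ennreal (\<theta> * exp (- \<theta> * \<tau>)) * indicator {0..w} \<tau> \<partial>lborel)"
    unfolding pointwise by (rule nn_integral_cmult) simp
  also have "\<dots> = ennreal (exp (- r * w)) * ennreal (1 - exp (- \<theta> * w))"
    by (simp only: nn_integral_exponential_atLeastAtMost[OF assms True])
  finally have "(\<integral>\<^sup>+\<tau>. ennreal (exp_decay (r + \<theta>) \<tau> * \<theta> * exp_decay r (w - \<tau>)) \<partial>lborel)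
      = ennreal (exp (- r * w)) * ennreal (1 - exp (- \<theta> * w))" .
  moreover have "0 \<le> 1 - exp (- \<theta> * w)"
    using True assms by simp
  ultimately show ?thesis
    using True by (simp add: exp_decay_def ennreal_mult)
next
  case False
  then have "(\<integral>\<^sup>+\<tau>. ennreal (exp_decay (r + \<theta>) \<tau> * \<theta> * exp_decay r (w - \<tau>)) \<partial>lborel)
      = (\<integral>\<^sup>+(\<tau>::real). 0 \<partial>lborel)"
    by (intro nn_integral_cong) (simp add: exp_decay_def)
  then show ?thesis
    using False by (simp add: exp_decay_def)
qed

lemma nn_integral_exp_decay_convolution:
  fixes H :: "real \<Rightarrow> ennreal"
  assumes "0 < \<theta>" and [measurable]: "H \<in> borel_measurable borel"
  shows "(\<integral>\<^sup>+\<tau>. ennreal (exp_decay (r + \<theta>) \<tau>) *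
            (ennreal \<theta> * (\<integral>\<^sup>+\<sigma>. ennreal (exp_decay r \<sigma>) * H (t + \<tau> + \<sigma>) \<partial>lborel)) \<partial>lborel)
       = (\<integral>\<^sup>+w. ennreal (exp_decay r w * (1 - exp (- \<theta> * w))) * H (t + w) \<partial>lborel)"
proof -
  define f where "f \<tau> w = ennreal (exp_decay (r + \<theta>) \<tau> * \<theta> * exp_decay r (w - \<tau>)) * H (t + w)" for \<tau> w
  have f_measurable [measurable]: "case_prod f \<in> borel_measurable (lborel \<Otimes>\<^sub>M lborel)"
    unfolding f_def by measurable
  have "ennreal (exp_decay (r + \<theta>) \<tau>) *
      (ennreal \<theta> * (\<integral>\<^sup>+\<sigma>. ennreal (exp_decay r \<sigma>) * H (t + \<tau> + \<sigma>) \<partial>lborel))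
      = (\<integral>\<^sup>+w. f \<tau> w \<partial>lborel)" for \<tau>
  proof -
    have "(\<integral>\<^sup>+\<sigma>. ennreal (exp_decay r \<sigma>) * H (t + \<tau> + \<sigma>) \<partial>lborel)
        = (\<integral>\<^sup>+w. ennreal (exp_decay r (w - \<tau>)) * H (t + w) \<partial>lborel)"
      by (subst nn_integral_real_affine[where c=1 and t=\<tau>]) (simp_all add: add.assoc)
    moreover have "f \<tau> w = (ennreal (exp_decay (r + \<theta>) \<tau>) * ennreal \<theta>) * (ennreal (exp_decay r (w - \<tau>)) * H (t + w))" for w
      unfolding f_def using \<open>0 < \<theta>\<close> by (simp add: ennreal_mult mult_ac)
    ultimately show ?thesis
      by (simp add: nn_integral_cmult mult.assoc)
  qed
  then have "(\<integral>\<^sup>+\<tau>. ennreal (exp_decay (r + \<theta>) \<tau>) *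
            (ennreal \<theta> * (\<integral>\<^sup>+\<sigma>. ennreal (exp_decay r \<sigma>) * H (t + \<tau> + \<sigma>) \<partial>lborel)) \<partial>lborel)
      = (\<integral>\<^sup>+\<tau>. (\<integral>\<^sup>+w. f \<tau> w \<partial>lborel) \<partial>lborel)"
    by simp
  also have "\<dots> = (\<integral>\<^sup>+w. (\<integral>\<^sup>+\<tau>. f \<tau> w \<partial>lborel) \<partial>lborel)"
    by (rule lborel_pair.Fubini'[OF f_measurable, symmetric])
  also have "\<dots> = (\<integral>\<^sup>+w. ennreal (exp_decay r w * (1 - exp (- \<theta> * w))) * H (t + w) \<partial>lborel)"
    unfolding f_def by (simp add: nn_integral_multc nn_integral_exp_decay_product[OF \<open>0 < \<theta>\<close>])
  finally show ?thesis .
qed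

text \<open>Uniformization: adding fictitious self-loops of rate \<open>\<theta>\<close> to a state with holding
  rate \<open>r\<close> leaves its first-step value unchanged.\<close>
lemma nn_integral_exp_decay_uniformization:
  fixes H :: "real \<Rightarrow> ennreal"
  assumes "0 < \<theta>" and [measurable]: "H \<in> borel_measurable borel"
  shows "(\<integral>\<^sup>+\<tau>. ennreal (exp_decay (r + \<theta>) \<tau>) *
            (H (t + \<tau>) + ennreal \<theta> * (\<integral>\<^sup>+\<sigma>. ennreal (exp_decay r \<sigma>) * H (t + \<tau> + \<sigma>) \<partial>lborel)) \<partial>lborel)
       = (\<integral>\<^sup>+w. ennreal (exp_decay r w) * H (t + w) \<partial>lborel)"
proof -
  have decay_split: "ennreal (exp_decay (r + \<theta>) w) + ennreal (exp_decay r w * (1 - exp (- \<theta> * w)))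
      = ennreal (exp_decay r w)" for w
  proof (cases "0 \<le> w")
    case True
    then have "0 \<le> 1 - exp (- \<theta> * w)" using \<open>0 < \<theta>\<close> by simp
    moreover have "exp_decay (r + \<theta>) w + exp_decay r w * (1 - exp (- \<theta> * w)) = exp_decay r w"
      using True by (simp add: exp_decay_def algebra_simps exp_add[symmetric])
    ultimately show ?thesis
      using True by (subst ennreal_plus[symmetric]) (auto simp: exp_decay_def)
  qed (simp add: exp_decay_def)
  have "(\<integral>\<^sup>+\<tau>. ennreal (exp_decay (r + \<theta>) \<tau>) *
            (H (t + \<tau>) + ennreal \<theta> * (\<integral>\<^sup>+\<sigma>. ennreal (exp_decay r \<sigma>) * H (t + \<tau> + \<sigma>) \<partial>lborel)) \<partial>lborel)
      = (\<integral>\<^sup>+\<tau>. ennreal (exp_decay (r + \<theta>) \<tau>) * H (t + \<tau>) \<partial>lborel)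
        + (\<integral>\<^sup>+w. ennreal (exp_decay r w * (1 - exp (- \<theta> * w))) * H (t + w) \<partial>lborel)"
    unfolding distrib_left
    by (subst nn_integral_add) (simp_all add: nn_integral_exp_decay_convolution[OF assms])
  also have "\<dots> = (\<integral>\<^sup>+w. ennreal (exp_decay (r + \<theta>) w) * H (t + w)
      + ennreal (exp_decay r w * (1 - exp (- \<theta> * w))) * H (t + w) \<partial>lborel)"
    by (rule nn_integral_add[symmetric]) simp_all
  also have "\<dots> = (\<integral>\<^sup>+w. ennreal (exp_decay r w) * H (t + w) \<partial>lborel)"
    unfolding distrib_right[symmetric] decay_split ..
  finally show ?thesis .
qed

lemma nn_integral_exp_decay_in_horizon_le:
  assumes "0 < r" and "r \<le> r'"
  shows "(\<integral>\<^sup>+\<tau>. ennreal (exp_decay r' \<tau>) * (ennreal r * in_horizon T (t + \<tau>)) \<partial>lborel) \<le> in_horizon T t"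
proof (cases "t \<le> T")
  case True
  have "(\<integral>\<^sup>+\<tau>. ennreal (exp_decay r' \<tau>) * (ennreal r * in_horizon T (t + \<tau>)) \<partial>lborel)
      \<le> (\<integral>\<^sup>+\<tau>. ennreal (exponential_density r' \<tau>) \<partial>lborel)"
  proof (rule nn_integral_mono)
    fix \<tau> :: real
    have "ennreal (exp_decay r' \<tau>) * (ennreal r * in_horizon T (t + \<tau>)) \<le> ennreal (exp_decay r' \<tau> * r)"
      using assms by (auto simp: in_horizon_def exp_decay_def ennreal_mult'')
    also have "\<dots> \<le> ennreal (exponential_density r' \<tau>)"
      using assms by (auto simp: exponential_density_eq_exp_decay exp_decay_def intro!: ennreal_leI)
    finally show "ennreal (exp_decay r' \<tau>) * (ennreal r * in_horizon T (t + \<tau>))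
        \<le> ennreal (exponential_density r' \<tau>)" .
  qed
  also have "\<dots> = 1"
  proof -
    interpret prob_space "density lborel (exponential_density r')"
      using assms by (intro prob_space_exponential_density) simp
    show ?thesis using emeasure_space_1 by (simp add: emeasure_density)
  qed
  finally show ?thesis using True by (simp add: in_horizon_def)
next
  case False
  then have "(\<integral>\<^sup>+\<tau>. ennreal (exp_decay r' \<tau>) * (ennreal r * in_horizon T (t + \<tau>)) \<partial>lborel)
      = (\<integral>\<^sup>+(\<tau>::real). 0 \<partial>lborel)"
    by (intro nn_integral_cong) (auto simp: in_horizon_def exp_decay_def)
  then show ?thesis by simp
qed

section \<open>States and policies\<close>

definition add_agent :: "state \<Rightarrow> nat \<Rightarrow> state" where
  "add_agent A i = A[i := A ! i + 1]"

definition remove_agent :: "state \<Rightarrow> nat \<Rightarrow> state" where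
  "remove_agent A i = A[i := A ! i - 1]"

lemma length_add_agent [simp]: "length (add_agent A i) = length A"
  by (simp add: add_agent_def)

lemma length_remove_agent [simp]: "length (remove_agent A i) = length A"
  by (simp add: remove_agent_def)

lemma nth_add_agent: "i < length A \<Longrightarrow> add_agent A i ! k = (if k = i then A ! i + 1 else A ! k)"
  by (simp add: add_agent_def nth_list_update)

lemma nth_remove_agent: "i < length A \<Longrightarrow> remove_agent A i ! k = (if k = i then A ! i - 1 else A ! k)"
  by (simp add: remove_agent_def nth_list_update)

lemma add_remove_agent: "i < length A \<Longrightarrow> 0 < A ! i \<Longrightarrow> add_agent (remove_agent A i) i = A"
  by (simp add: add_agent_def remove_agent_def list_update_same_conv)

lemma remove_add_agent: "i < length A \<Longrightarrow> remove_agent (add_agent A i) i = A"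
  by (simp add: add_agent_def remove_agent_def)

lemma remove_add_agent_commute:
  "i < length A \<Longrightarrow> k < length A \<Longrightarrow> 0 < A ! k \<Longrightarrow>
    remove_agent (add_agent A i) k = add_agent (remove_agent A k) i"
  by (cases "i = k") (auto simp: add_agent_def remove_agent_def list_update_swap nth_list_update)

lemma add_agent_commute: "add_agent (add_agent A i) k = add_agent (add_agent A k) i"
  by (cases "i = k") (auto simp: add_agent_def list_update_swap nth_list_update)

lemma remove_agent_commute: "remove_agent (remove_agent A i) k = remove_agent (remove_agent A k) i"
  by (cases "i = k") (auto simp: remove_agent_def list_update_swap nth_list_update)

lemma acr_admissible: "acr \<in> admissible l"
  unfolding admissible_def
  by (auto simp: acr_def sum_from_minus_one_int sum.delta)

lemma admissible_nonneg:
  "p \<in> admissible l \<Longrightarrow> length A = Suc l \<Longrightarrow> j \<le> l \<Longrightarrow> i \<in> {-1..int l} \<Longrightarrow> 0 \<le> p A j i"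
  unfolding admissible_def by blast

lemma admissible_sum_eq_1:
  "p \<in> admissible l \<Longrightarrow> length A = Suc l \<Longrightarrow> j \<le> l \<Longrightarrow> p A j (-1) + (\<Sum>i\<le>l. p A j (int i)) = 1"
  unfolding admissible_def sum_from_minus_one_int[symmetric] by blast

lemma admissible_absent_type:
  "p \<in> admissible l \<Longrightarrow> length A = Suc l \<Longrightarrow> j \<le> l \<Longrightarrow> i \<le> l \<Longrightarrow> A ! i = 0 \<Longrightarrow> p A j (int i) = 0"
  unfolding admissible_def by blast

lemma admissible_incompatible_type:
  "p \<in> admissible l \<Longrightarrow> length A = Suc l \<Longrightarrow> j \<le> l \<Longrightarrow> i \<le> l \<Longrightarrow> i \<noteq> 0 \<Longrightarrow> i \<noteq> j \<Longrightarrow> p A j (int i) = 0"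
  unfolding admissible_def by blast

lemma sum_list_events:
  fixes F :: "real \<Rightarrow> state \<times> bool \<Rightarrow> 'a::comm_monoid_add"
  shows "(\<Sum>e\<leftarrow>events l lam mu \<theta> p A. F (fst e) (snd e)) =
    (\<Sum>i\<le>l. F (lam i) (add_agent A i, False)) + (\<Sum>i\<le>l. F (\<theta> * real (A ! i)) (remove_agent A i, False))
    + (\<Sum>j\<le>l. \<Sum>i\<le>l. F (mu j * p A j (int i)) (remove_agent A i, True))
    + (\<Sum>j\<le>l. F (mu j * p A j (-1)) (A, False))"
  unfolding events_def
  by (simp del: upt_Suc add: sum_list_concat map_concat comp_def sum_list_map_upt_Suc_eq_sum_atMost
      add_agent_def remove_agent_def add.assoc)

section \<open>The jump chain\<close>

lemma space_SP [simp]: "space SP = UNIV"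
  by (simp add: SP_def space_pair_measure)

lemma measurable_insert_time:
  "(\<lambda>(s::real, x::state \<times> bool). (fst x, s, snd x)) \<in> measurable (borel \<Otimes>\<^sub>M count_space UNIV) SP"
  unfolding SP_def by (auto intro!: measurable_Pair measurable_compose[OF measurable_snd] simp: case_prod_beta')

locale matching_model =
  fixes l :: nat and lam mu :: "nat \<Rightarrow> real" and \<theta> :: real
  assumes lam_pos: "\<And>i. i \<le> l \<Longrightarrow> 0 < lam i"
    and mu_pos: "\<And>j. j \<le> l \<Longrightarrow> 0 < mu j"
    and theta_pos: "0 < \<theta>"
begin

abbreviation "rate \<equiv> total_rate l lam mu \<theta>"
abbreviation "jump \<equiv> jump_dist l lam mu \<theta>"
abbreviation "step \<equiv> step_kernel l lam mu \<theta>"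

lemma rate_pos: "0 < rate A"
proof -
  have "0 < (\<Sum>i\<le>l. lam i)" and "0 < (\<Sum>i\<le>l. mu i)"
    by (auto intro!: sum_pos lam_pos mu_pos)
  moreover have "0 \<le> \<theta> * (\<Sum>i\<le>l. real (A ! i))"
    using theta_pos by (intro mult_nonneg_nonneg sum_nonneg) auto
  ultimately show ?thesis unfolding total_rate_def by linarith
qed

lemma sets_jump [measurable_cong]: "sets (jump p A) = sets (count_space UNIV)"
  by (simp add: jump_dist_def)

lemma space_jump [simp]: "space (jump p A) = UNIV"
  by (simp add: jump_dist_def)

lemma subprob_space_jump_iff: "subprob_space (jump p A) \<longleftrightarrow> emeasure (jump p A) UNIV \<le> 1"
  using subprob_space.emeasure_space_le_1[of "jump p A"]
  by (auto intro!: subprob_spaceI)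

definition jump_at :: "policy \<Rightarrow> state \<Rightarrow> real \<Rightarrow> (state \<times> real \<times> bool) measure" where
  "jump_at p A s = bind (jump p A) (\<lambda>(B, g). return SP (B, s, g))"

lemma step_eq: "step p (A, t, g) = bind (density lborel (exponential_density (rate A))) (\<lambda>\<tau>. jump_at p A (t + \<tau>))"
  unfolding step_kernel_def jump_at_def by simp

lemma measurable_return_jump:
  "(\<lambda>(B, g). return SP (B, s, g)) \<in> measurable (jump p A) (subprob_algebra SP)"
  unfolding measurable_cong_sets[OF sets_jump refl] measurable_count_space_eq1
  by (simp add: space_subprob_algebra subprob_space_return split: prod.split)

lemma sets_jump_at [measurable_cong]: "sets (jump_at p A s) = sets SP"
  unfolding jump_at_def by (rule sets_bind) (auto split: prod.split)

lemma sets_step [measurable_cong]: "sets (step p s) = sets SP"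
  by (cases s) (auto simp: step_eq sets_jump_at)

lemma space_step [simp]: "space (step p s) = UNIV"
  using sets_eq_imp_space_eq[OF sets_step] by simp

lemma emeasure_jump_at_UNIV: "emeasure (jump_at p A s) UNIV = emeasure (jump p A) UNIV"
proof -
  have "emeasure (jump_at p A s) UNIV = (\<integral>\<^sup>+x. 1 \<partial>jump p A)"
    unfolding jump_at_def using sets.top[of SP]
    by (subst emeasure_bind[OF _ measurable_return_jump]) (auto simp: case_prod_beta' emeasure_return)
  then show ?thesis by simp
qed

lemma measurable_jump_at:
  assumes "subprob_space (jump p A)"
  shows "jump_at p A \<in> measurable borel (subprob_algebra SP)"
proof -
  have "(\<lambda>_::real. jump p A) \<in> measurable borel (subprob_algebra (count_space UNIV))"
    using assms by (intro measurable_const) (simp add: space_subprob_algebra sets_jump)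
  moreover have "(\<lambda>(s, x). return SP (fst x, s, snd x)) \<in> measurable (borel \<Otimes>\<^sub>M count_space UNIV) (subprob_algebra SP)"
    using measurable_compose[OF measurable_insert_time return_measurable] by (simp add: case_prod_beta' comp_def)
  moreover have "jump_at p A = (\<lambda>s. bind (jump p A) (\<lambda>x. return SP (fst x, s, snd x)))"
    by (simp add: jump_at_def[abs_def] case_prod_beta')
  ultimately show ?thesis
    by (simp only: measurable_bind')
qed

text \<open>For a state of the wrong length, or a policy that is not admissible, \<open>jump p A\<close> may have
  total mass above 1; \<open>bind\<close> then returns the zero measure, so \<open>step\<close> is still a
  sub-probability kernel on all of \<open>SP\<close>.\<close>
lemma emeasure_step_not_subprob:
  assumes "\<not> subprob_space (jump p A)"
  shows "emeasure (step p (A, t, g)) X = 0"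
  unfolding step_eq
proof (rule emeasure_bind_not_subprob)
  fix \<tau>
  show "jump_at p A (t + \<tau>) \<notin> space (subprob_algebra (jump_at p A (t + (SOME x. x \<in> space (density lborel (exponential_density (rate A)))))))"
    using assms subprob_space.emeasure_space_le_1[of "jump_at p A (t + \<tau>)"]
    by (auto simp: space_subprob_algebra emeasure_jump_at_UNIV subprob_space_jump_iff
        sets_eq_imp_space_eq[OF sets_jump_at])
qed simp

lemma measurable_step_time:
  assumes "subprob_space (jump p A)"
  shows "(\<lambda>t. step p (A, t, g)) \<in> measurable borel (subprob_algebra SP)"
proof -
  have "(\<lambda>_::real. density lborel (exponential_density (rate A))) \<in> measurable borel (subprob_algebra borel)"
    by (intro measurable_const)
       (simp add: space_subprob_algebra prob_space_imp_subprob_space prob_space_exponential_density rate_pos)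
  moreover have "(\<lambda>(t, \<tau>). jump_at p A (t + \<tau>)) \<in> measurable (borel \<Otimes>\<^sub>M borel) (subprob_algebra SP)"
    using measurable_jump_at[OF assms] by measurable
  ultimately show ?thesis
    unfolding step_eq by (rule measurable_bind')
qed

lemma subprob_space_step: "subprob_space (step p s)"
proof -
  obtain A t g where s: "s = (A, t, g)" by (cases s)
  show ?thesis
  proof (cases "subprob_space (jump p A)")
    case True
    have "subprob_space (density lborel (exponential_density (rate A)))"
      by (intro prob_space_imp_subprob_space prob_space_exponential_density rate_pos)
    moreover have "(\<lambda>\<tau>. jump_at p A (t + \<tau>)) \<in> measurable borel (subprob_algebra SP)"
      using measurable_jump_at[OF True] by measurable
    ultimately show ?thesis
      unfolding s step_eq by (intro subprob_space_bind) (simp_all cong: measurable_cong_sets)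
  next
    case False
    then show ?thesis
      unfolding s by (intro subprob_spaceI) (auto simp: emeasure_step_not_subprob)
  qed
qed

lemma measurable_step: "step p \<in> measurable SP (subprob_algebra SP)"
proof (rule measurable_subprob_algebra)
  fix X assume X: "X \<in> sets SP"
  have time_measurable: "(\<lambda>s. fst (snd s)) \<in> measurable SP borel"
    unfolding SP_def by measurable
  have "(\<lambda>s. emeasure (step p (A, fst (snd s), False)) X) \<in> borel_measurable SP" for A
  proof (cases "subprob_space (jump p A)")
    case True
    show ?thesis
      by (rule measurable_compose[OF time_measurable measurable_compose[OF measurable_step_time[OF True]
            measurable_emeasure_subprob_algebra[OF X]]])
  qed (simp add: emeasure_step_not_subprob)
  moreover have "fst \<in> measurable SP (count_space UNIV)"
    unfolding SP_def by measurable
  ultimately have "(\<lambda>s. emeasure (step p (fst s, fst (snd s), False)) X) \<in> borel_measurable SP"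
    by (rule measurable_compose_countable'[where f="\<lambda>A s. emeasure (step p (A, fst (snd s), False)) X"]) simp
  moreover have "step p s = step p (fst s, fst (snd s), False)" for s
    by (cases s) (simp add: step_eq)
  ultimately show "(\<lambda>s. emeasure (step p s) X) \<in> borel_measurable SP"
    by simp
qed (simp_all add: subprob_space_step sets_step)

primrec jump_law_from :: "policy \<Rightarrow> state \<times> real \<times> bool \<Rightarrow> nat \<Rightarrow> (state \<times> real \<times> bool) measure" where
  "jump_law_from p s 0 = return SP s"
| "jump_law_from p s (Suc n) = bind (jump_law_from p s n) (step p)"

lemma jump_law_eq_jump_law_from: "jump_law l lam mu \<theta> p A0 n = jump_law_from p (A0, 0, False) n"
  by (induction n) simp_all

lemma measurable_jump_law_from: "(\<lambda>s. jump_law_from p s n) \<in> measurable SP (subprob_algebra SP)"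
proof (induction n)
  case (Suc n)
  have "(\<lambda>(x, y). step p y) \<in> measurable (SP \<Otimes>\<^sub>M SP) (subprob_algebra SP)"
    using measurable_compose[OF measurable_snd measurable_step] by (simp add: case_prod_unfold comp_def)
  then show ?case using measurable_bind'[OF Suc] by simp
qed (simp add: return_measurable)

lemma jump_law_from_Suc_first: "jump_law_from p s (Suc n) = bind (step p s) (\<lambda>s'. jump_law_from p s' n)"
proof (induction n arbitrary: s)
  case 0
  show ?case
    using bind_return[OF measurable_step] bind_return''[OF sets_step] by simp
next
  case (Suc n)
  have "jump_law_from p s (Suc (Suc n)) = bind (bind (step p s) (\<lambda>s'. jump_law_from p s' n)) (step p)"
    using Suc by simp
  also have "\<dots> = bind (step p s) (\<lambda>s'. bind (jump_law_from p s' n) (step p))"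
    using measurable_jump_law_from by (intro bind_assoc[OF _ measurable_step]) (simp cong: measurable_cong_sets)
  finally show ?case by simp
qed

definition matches_by :: "real \<Rightarrow> (state \<times> real \<times> bool) set" where
  "matches_by T = {(B, t, g). g \<and> t \<le> T}"

lemma matches_by_sets [measurable]: "matches_by T \<in> sets SP"
proof -
  have "matches_by T = UNIV \<times> ({..T} \<times> {True})"
    by (auto simp: matches_by_def)
  then show ?thesis
    unfolding SP_def by (auto intro!: pair_measureI)
qed

definition jump_matches :: "policy \<Rightarrow> real \<Rightarrow> nat \<Rightarrow> state \<times> real \<times> bool \<Rightarrow> ennreal" where
  "jump_matches p T n s = (\<Sum>k<n. emeasure (jump_law_from p s (Suc k)) (matches_by T))"

lemma borel_measurable_jump_matches [measurable]: "jump_matches p T n \<in> borel_measurable SP"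
  unfolding jump_matches_def[abs_def]
  by (intro borel_measurable_sum measurable_compose[OF measurable_jump_law_from
        measurable_emeasure_subprob_algebra[OF matches_by_sets]])

lemma jump_matches_Suc:
  "jump_matches p T (Suc n) s = (\<integral>\<^sup>+s'. indicator (matches_by T) s' + jump_matches p T n s' \<partial>step p s)"
proof -
  have measurable: "(\<lambda>s'. emeasure (jump_law_from p s' k) (matches_by T)) \<in> borel_measurable (step p s)" for k
    by (subst measurable_cong_sets[OF sets_step refl])
       (rule measurable_compose[OF measurable_jump_law_from measurable_emeasure_subprob_algebra[OF matches_by_sets]])
  have "jump_matches p T (Suc n) s
      = (\<Sum>k<Suc n. \<integral>\<^sup>+s'. emeasure (jump_law_from p s' k) (matches_by T) \<partial>step p s)"
    unfolding jump_matches_def jump_law_from_Suc_first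
    by (intro sum.cong refl emeasure_bind[OF _ _ matches_by_sets])
       (simp_all add: measurable_cong_sets[OF sets_step refl] measurable_jump_law_from)
  also have "\<dots> = (\<integral>\<^sup>+s'. (\<Sum>k<Suc n. emeasure (jump_law_from p s' k) (matches_by T)) \<partial>step p s)"
    by (rule nn_integral_sum[symmetric]) (simp add: measurable)
  also have "\<dots> = (\<integral>\<^sup>+s'. indicator (matches_by T) s' + jump_matches p T n s' \<partial>step p s)"
    unfolding jump_matches_def sum.lessThan_Suc_shift by simp
  finally show ?thesis .
qed

lemma expected_matches_eq_SUP_jump_matches:
  "expected_matches l lam mu \<theta> p A0 T = (SUP n. jump_matches p T n (A0, 0, False))"
  unfolding expected_matches_def jump_law_eq_jump_law_from jump_matches_def matches_by_def
  by (rule suminf_eq_SUP)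

lemma events_nonneg:
  assumes "p \<in> admissible l" "length A = Suc l" "e \<in> set (events l lam mu \<theta> p A)"
  shows "0 \<le> fst e"
proof -
  have "i \<le> l \<Longrightarrow> 0 \<le> lam i" "i \<le> l \<Longrightarrow> 0 \<le> mu i" for i
    using lam_pos[of i] mu_pos[of i] by simp_all
  then show ?thesis
    using assms(3) theta_pos admissible_nonneg[OF assms(1,2)]
    unfolding events_def by (auto simp del: upt_Suc intro!: mult_nonneg_nonneg)
qed

lemma sum_list_events_rates:
  assumes "p \<in> admissible l" "length A = Suc l"
  shows "(\<Sum>e\<leftarrow>events l lam mu \<theta> p A. fst e) = rate A"
proof -
  have "(\<Sum>j\<le>l. \<Sum>i\<le>l. mu j * p A j (int i)) + (\<Sum>j\<le>l. mu j * p A j (-1))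
      = (\<Sum>j\<le>l. mu j * (p A j (-1) + (\<Sum>i\<le>l. p A j (int i))))"
    by (simp add: sum.distrib[symmetric] sum_distrib_left algebra_simps)
  also have "\<dots> = (\<Sum>j\<le>l. mu j)"
    using admissible_sum_eq_1[OF assms] by simp
  finally show ?thesis
    using sum_list_events[where F="\<lambda>x s. x"]
    by (simp add: total_rate_def sum_distrib_left add.assoc)
qed

lemma nn_integral_jump:
  assumes "p \<in> admissible l" "length A = Suc l"
  shows "(\<integral>\<^sup>+x. f x \<partial>jump p A) = (\<Sum>e\<leftarrow>events l lam mu \<theta> p A. ennreal (fst e / rate A) * f (snd e))"
proof -
  have density_eq: "ennreal (\<Sum>e\<leftarrow>events l lam mu \<theta> p A. if snd e = x then fst e / rate A else 0)
      = (\<Sum>e\<leftarrow>events l lam mu \<theta> p A. ennreal (fst e / rate A) * indicator {snd e} x)" for x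
  proof -
    have "ennreal (\<Sum>e\<leftarrow>events l lam mu \<theta> p A. if snd e = x then fst e / rate A else 0)
        = (\<Sum>e\<leftarrow>events l lam mu \<theta> p A. ennreal (if snd e = x then fst e / rate A else 0))"
      using events_nonneg[OF assms] rate_pos[of A] by (intro sum_list_ennreal[symmetric]) auto
    also have "\<dots> = (\<Sum>e\<leftarrow>events l lam mu \<theta> p A. ennreal (fst e / rate A) * indicator {snd e} x)"
      by (intro arg_cong[where f=sum_list] map_cong refl) (auto simp: indicator_def)
    finally show ?thesis .
  qed
  then show ?thesis
    unfolding jump_dist_def
    by (simp only: nn_integral_density density_eq nn_integral_count_space_sum_list_indicator[of "\<lambda>x. ennreal (x / rate A)"]
        borel_measurable_count_space)
qed

lemma subprob_space_jump:
  assumes "p \<in> admissible l" "length A = Suc l"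
  shows "subprob_space (jump p A)"
proof -
  have "emeasure (jump p A) UNIV = (\<Sum>e\<leftarrow>events l lam mu \<theta> p A. ennreal (fst e / rate A))"
    using nn_integral_jump[OF assms, of "\<lambda>_. 1"] by simp
  also have "\<dots> = ennreal ((\<Sum>e\<leftarrow>events l lam mu \<theta> p A. fst e) / rate A)"
    using events_nonneg[OF assms] rate_pos[of A]
    by (simp add: sum_list_const_mult[symmetric] divide_inverse mult.commute)
  also have "\<dots> = 1"
    using sum_list_events_rates[OF assms] rate_pos[of A] by simp
  finally show ?thesis by (simp add: subprob_space_jump_iff)
qed

lemma nn_integral_step:
  assumes "p \<in> admissible l" "length A = Suc l" and h_measurable [measurable]: "h \<in> borel_measurable SP"
  shows "(\<integral>\<^sup>+s'. h s' \<partial>step p (A, t, g)) = (\<integral>\<^sup>+\<tau>. ennreal (exp_decay (rate A) \<tau>) *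
      (\<Sum>e\<leftarrow>events l lam mu \<theta> p A. ennreal (fst e) * h (fst (snd e), t + \<tau>, snd (snd e))) \<partial>lborel)"
proof -
  let ?es = "events l lam mu \<theta> p A"
  have jump_measurable: "jump_at p A \<in> measurable borel (subprob_algebra SP)"
    by (rule measurable_jump_at[OF subprob_space_jump[OF assms(1,2)]])
  have "(\<integral>\<^sup>+s'. h s' \<partial>jump_at p A s) = (\<integral>\<^sup>+x. h (fst x, s, snd x) \<partial>jump p A)" for s
    unfolding jump_at_def
    by (subst nn_integral_bind[OF h_measurable measurable_return_jump])
       (auto intro!: nn_integral_cong simp: nn_integral_return split: prod.split)
  then have jump_at_eq: "(\<integral>\<^sup>+s'. h s' \<partial>jump_at p A s) = (\<Sum>e\<leftarrow>?es. ennreal (fst e / rate A) * h (fst (snd e), s, snd (snd e)))" for s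
    by (simp add: nn_integral_jump[OF assms(1,2)])
  have rate_cancel: "ennreal (exponential_density (rate A) \<tau>) * ennreal (x / rate A) = ennreal (exp_decay (rate A) \<tau>) * ennreal x"
    if "0 \<le> x" for x \<tau>
    using rate_pos[of A] that
    by (auto simp: exponential_density_eq_exp_decay exp_decay_def ennreal_mult'[symmetric] ennreal_mult''[symmetric] mult_ac)
  have "(\<integral>\<^sup>+s'. h s' \<partial>step p (A, t, g))
      = (\<integral>\<^sup>+\<tau>. ennreal (exponential_density (rate A) \<tau>) * (\<integral>\<^sup>+s'. h s' \<partial>jump_at p A (t + \<tau>)) \<partial>lborel)"
    unfolding step_eq
    by (subst nn_integral_bind[OF h_measurable])
       (auto intro!: nn_integral_density measurable_compose[OF _ nn_integral_measurable_subprob_algebra[OF h_measurable]]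
         measurable_compose[OF _ jump_measurable] cong: measurable_cong_sets)
  also have "\<dots> = (\<integral>\<^sup>+\<tau>. ennreal (exp_decay (rate A) \<tau>) *
      (\<Sum>e\<leftarrow>?es. ennreal (fst e) * h (fst (snd e), t + \<tau>, snd (snd e))) \<partial>lborel)"
    unfolding jump_at_eq sum_list_const_mult[symmetric]
    using events_nonneg[OF assms(1,2)]
    by (intro nn_integral_cong arg_cong[where f=sum_list] map_cong refl) (simp add: mult.assoc[symmetric] rate_cancel)
  finally show ?thesis .
qed

section \<open>Value iteration\<close>

definition transition_value :: "policy \<Rightarrow> real \<Rightarrow> (state \<Rightarrow> real \<Rightarrow> ennreal) \<Rightarrow> state \<Rightarrow> real \<Rightarrow> ennreal" where
  "transition_value p T F A u =
      (\<Sum>i\<le>l. ennreal (lam i) * F (add_agent A i) u)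
    + (\<Sum>i\<le>l. ennreal (\<theta> * real (A ! i)) * F (remove_agent A i) u)
    + (\<Sum>j\<le>l. \<Sum>i\<le>l. ennreal (mu j * p A j (int i)) * (in_horizon T u + F (remove_agent A i) u))
    + (\<Sum>j\<le>l. ennreal (mu j * p A j (-1)) * F A u)"

text \<open>The event rates in \<open>transition_value\<close> are the jump probabilities times \<open>rate A\<close>;
  that factor is taken from the holding density, leaving \<open>exp_decay (rate A)\<close> (see \<open>nn_integral_step\<close>).\<close>
definition bellman :: "policy \<Rightarrow> real \<Rightarrow> (state \<Rightarrow> real \<Rightarrow> ennreal) \<Rightarrow> state \<Rightarrow> real \<Rightarrow> ennreal" where
  "bellman p T F A t = (\<integral>\<^sup>+\<tau>. ennreal (exp_decay (rate A) \<tau>) * transition_value p T F A (t + \<tau>) \<partial>lborel)"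

primrec value_iter :: "policy \<Rightarrow> real \<Rightarrow> nat \<Rightarrow> state \<Rightarrow> real \<Rightarrow> ennreal" where
  "value_iter p T 0 = (\<lambda>A t. 0)"
| "value_iter p T (Suc n) = bellman p T (value_iter p T n)"

lemma jump_matches_eq_value_iter:
  assumes "p \<in> admissible l"
  shows "length A = Suc l \<Longrightarrow> jump_matches p T n (A, t, g) = value_iter p T n A t"
proof (induction n arbitrary: A t g)
  case 0
  then show ?case by (simp add: jump_matches_def)
next
  case (Suc n)
  define h where "h s = indicator (matches_by T) s + jump_matches p T n s" for s
  have "jump_matches p T (Suc n) (A, t, g) = (\<integral>\<^sup>+\<tau>. ennreal (exp_decay (rate A) \<tau>) *
      (\<Sum>e\<leftarrow>events l lam mu \<theta> p A. ennreal (fst e) * h (fst (snd e), t + \<tau>, snd (snd e))) \<partial>lborel)"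
    unfolding jump_matches_Suc h_def[symmetric]
    by (rule nn_integral_step[OF assms Suc.prems]) (simp add: h_def)
  also have "\<dots> = value_iter p T (Suc n) A t"
    unfolding value_iter.simps bellman_def sum_list_events[where F="\<lambda>x s. ennreal x * h (fst s, _, snd s)"]
    using Suc.IH Suc.prems
    by (simp add: transition_value_def h_def matches_by_def in_horizon_def indicator_def of_bool_def)
  finally show ?case .
qed

lemma expected_matches_eq_SUP_value_iter:
  assumes "p \<in> admissible l" "length A0 = Suc l"
  shows "expected_matches l lam mu \<theta> p A0 T = (SUP n. value_iter p T n A0 0)"
  using jump_matches_eq_value_iter[OF assms] by (simp add: expected_matches_eq_SUP_jump_matches)

lemma transition_value_mono:
  assumes "\<And>B u. length B = Suc l \<Longrightarrow> F B u \<le> G B u" "length A = Suc l"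
  shows "transition_value p T F A u \<le> transition_value p T G A u"
  unfolding transition_value_def using assms by (intro add_mono sum_mono mult_left_mono) auto

lemma bellman_mono:
  assumes "\<And>B u. length B = Suc l \<Longrightarrow> F B u \<le> G B u" "length A = Suc l"
  shows "bellman p T F A t \<le> bellman p T G A t"
  unfolding bellman_def using transition_value_mono[OF assms]
  by (intro nn_integral_mono mult_left_mono) auto

lemma borel_measurable_transition_value:
  assumes "\<And>B. F B \<in> borel_measurable borel"
  shows "transition_value p T F A \<in> borel_measurable borel"
  using assms unfolding transition_value_def[abs_def] by measurable

lemma borel_measurable_bellman:
  assumes "\<And>B. F B \<in> borel_measurable borel"
  shows "bellman p T F A \<in> borel_measurable borel"
proof -
  note borel_measurable_transition_value[OF assms, measurable]
  have "(\<lambda>(t, \<tau>). ennreal (exp_decay (rate A) \<tau>) * transition_value p T F A (t + \<tau>))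
      \<in> borel_measurable (borel \<Otimes>\<^sub>M lborel)"
    by measurable
  then show ?thesis
    unfolding bellman_def[abs_def] by (rule lborel.borel_measurable_nn_integral)
qed

lemma borel_measurable_value_iter: "value_iter p T n B \<in> borel_measurable borel"
  by (induction n arbitrary: B) (simp_all add: borel_measurable_bellman)

section \<open>Optimality of ACR\<close>

definition arrival_value :: "(state \<Rightarrow> real \<Rightarrow> ennreal) \<Rightarrow> state \<Rightarrow> real \<Rightarrow> ennreal" where
  "arrival_value F A u = (\<Sum>i\<le>l. ennreal (lam i) * F (add_agent A i) u)"

definition abandonment_value :: "(state \<Rightarrow> real \<Rightarrow> ennreal) \<Rightarrow> state \<Rightarrow> real \<Rightarrow> ennreal" where
  "abandonment_value F A u = (\<Sum>i\<le>l. ennreal (\<theta> * real (A ! i)) * F (remove_agent A i) u)"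

definition job_value :: "policy \<Rightarrow> real \<Rightarrow> (state \<Rightarrow> real \<Rightarrow> ennreal) \<Rightarrow> state \<Rightarrow> nat \<Rightarrow> real \<Rightarrow> ennreal" where
  "job_value p T F A j u =
      (\<Sum>i\<le>l. ennreal (mu j * p A j (int i)) * (in_horizon T u + F (remove_agent A i) u))
    + ennreal (mu j * p A j (-1)) * F A u"

lemma transition_value_split:
  "transition_value p T F A u = arrival_value F A u + abandonment_value F A u + (\<Sum>j\<le>l. job_value p T F A j u)"
  unfolding transition_value_def arrival_value_def abandonment_value_def job_value_def
  by (simp add: sum.distrib add.assoc)

definition acr_job_value :: "real \<Rightarrow> (state \<Rightarrow> real \<Rightarrow> ennreal) \<Rightarrow> state \<Rightarrow> nat \<Rightarrow> real \<Rightarrow> ennreal" where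
  "acr_job_value T F A j u =
     (if 0 < A ! j then in_horizon T u + F (remove_agent A j) u
      else if 0 < A ! 0 then in_horizon T u + F (remove_agent A 0) u
      else F A u)"

lemma job_value_acr:
  assumes "length A = Suc l" "j \<le> l"
  shows "job_value acr T F A j u = ennreal (mu j) * acr_job_value T F A j u"
proof -
  have "(\<Sum>i\<le>l. ennreal (mu j * acr A j (int i)) * (in_horizon T u + F (remove_agent A i) u))
      = (if 0 < A ! j then ennreal (mu j) * (in_horizon T u + F (remove_agent A j) u)
         else if 0 < A ! 0 then ennreal (mu j) * (in_horizon T u + F (remove_agent A 0) u) else 0)"
    using assms by (auto simp: acr_def if_distrib[of "\<lambda>x. ennreal (mu j * x) * _"] sum.delta cong: if_cong)
  then show ?thesis
    by (simp add: job_value_def acr_job_value_def acr_def)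
qed

lemma acr_job_value_cases:
  assumes "length A = Suc l" "j \<le> l"
  obtains i where "i \<in> {0, j}" "0 < A ! i" "acr_job_value T F A j u = in_horizon T u + F (remove_agent A i) u"
  | "A ! j = 0" "A ! 0 = 0" "acr_job_value T F A j u = F A u"
  unfolding acr_job_value_def by (metis gr0I insertCI)

definition flexible_dominates :: "(state \<Rightarrow> real \<Rightarrow> ennreal) \<Rightarrow> bool" where
  "flexible_dominates F \<longleftrightarrow>
     (\<forall>C u j. length C = Suc l \<longrightarrow> 1 \<le> j \<longrightarrow> j \<le> l \<longrightarrow> F (add_agent C j) u \<le> F (add_agent C 0) u)"

definition agent_gain_bounded :: "real \<Rightarrow> (state \<Rightarrow> real \<Rightarrow> ennreal) \<Rightarrow> bool" where
  "agent_gain_bounded T F \<longleftrightarrow>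
     (\<forall>C u i. length C = Suc l \<longrightarrow> i \<le> l \<longrightarrow> F (add_agent C i) u \<le> F C u + in_horizon T u)"

lemma flexible_dominatesD:
  "flexible_dominates F \<Longrightarrow> length C = Suc l \<Longrightarrow> 1 \<le> j \<Longrightarrow> j \<le> l \<Longrightarrow> F (add_agent C j) u \<le> F (add_agent C 0) u"
  unfolding flexible_dominates_def by blast

lemma agent_gain_boundedD:
  "agent_gain_bounded T F \<Longrightarrow> length C = Suc l \<Longrightarrow> i \<le> l \<Longrightarrow> F (add_agent C i) u \<le> F C u + in_horizon T u"
  unfolding agent_gain_bounded_def by blast

lemma agent_gain_bounded_remove:
  assumes "agent_gain_bounded T F" "length A = Suc l" "i \<le> l" "0 < A ! i"
  shows "F A u \<le> in_horizon T u + F (remove_agent A i) u"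
  using agent_gain_boundedD[OF assms(1), of "remove_agent A i" i u] assms(2-4)
  by (simp add: add_remove_agent add.commute)

lemma acr_job_value_ge_reject:
  assumes "agent_gain_bounded T F" "length A = Suc l" "j \<le> l"
  shows "F A u \<le> acr_job_value T F A j u"
  using agent_gain_bounded_remove[OF assms(1,2)] assms(2,3) by (auto simp: acr_job_value_def)

lemma acr_job_value_ge_serve:
  assumes "flexible_dominates F" "length A = Suc l" "j \<le> l" "i \<in> {0, j}" "0 < A ! i"
  shows "in_horizon T u + F (remove_agent A i) u \<le> acr_job_value T F A j u"
proof (cases "0 < A ! j \<and> i \<noteq> j")
  case True
  then have "i = 0" "1 \<le> j" using assms(4) by auto
  define C where "C = remove_agent (remove_agent A 0) j"
  have "remove_agent A 0 = add_agent C j"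
    unfolding C_def using True assms(2,3) \<open>i = 0\<close> by (subst add_remove_agent) (auto simp: nth_remove_agent)
  moreover have "remove_agent A j = add_agent C 0"
    unfolding C_def remove_agent_commute[of A 0 j] using True assms(2,3,5) \<open>i = 0\<close>
    by (subst add_remove_agent) (auto simp: nth_remove_agent)
  moreover have "length C = Suc l" using assms(2) by (simp add: C_def)
  ultimately show ?thesis
    using True \<open>i = 0\<close> flexible_dominatesD[OF assms(1) _ \<open>1 \<le> j\<close> assms(3)]
    by (simp add: acr_job_value_def add_left_mono)
next
  case False
  then show ?thesis using assms(4,5) by (auto simp: acr_job_value_def)
qed

lemma job_value_le_acr:
  assumes "flexible_dominates F" "agent_gain_bounded T F" "p \<in> admissible l" "length A = Suc l" "j \<le> l"
  shows "job_value p T F A j u \<le> ennreal (mu j) * acr_job_value T F A j u"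
proof -
  let ?G = "acr_job_value T F A j u"
  have serve: "ennreal (mu j * p A j (int i)) * (in_horizon T u + F (remove_agent A i) u)
      \<le> ennreal (mu j * p A j (int i)) * ?G" if "i \<le> l" for i
  proof (cases "p A j (int i) = 0")
    case False
    then have "i \<in> {0, j}" "0 < A ! i"
      using admissible_absent_type[OF assms(3-5) that] admissible_incompatible_type[OF assms(3-5) that] by auto
    then show ?thesis
      by (intro mult_left_mono acr_job_value_ge_serve[OF assms(1,4,5)]) auto
  qed simp
  have reject: "ennreal (mu j * p A j (-1)) * F A u \<le> ennreal (mu j * p A j (-1)) * ?G"
    by (intro mult_left_mono acr_job_value_ge_reject[OF assms(2,4,5)]) simp
  have serve_nonneg: "0 \<le> mu j * p A j (int i)" if "i \<le> l" for i
    using mu_pos[OF assms(5)] admissible_nonneg[OF assms(3-5)] that by auto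
  have reject_nonneg: "0 \<le> mu j * p A j (-1)"
    using mu_pos[OF assms(5)] admissible_nonneg[OF assms(3-5)] by auto
  have "job_value p T F A j u \<le> (\<Sum>i\<le>l. ennreal (mu j * p A j (int i)) * ?G) + ennreal (mu j * p A j (-1)) * ?G"
    unfolding job_value_def by (intro add_mono sum_mono serve reject) auto
  also have "\<dots> = (ennreal (\<Sum>i\<le>l. mu j * p A j (int i)) + ennreal (mu j * p A j (-1))) * ?G"
  proof -
    have "(\<Sum>i\<le>l. ennreal (mu j * p A j (int i))) = ennreal (\<Sum>i\<le>l. mu j * p A j (int i))"
      using serve_nonneg by (intro sum_ennreal) auto
    then show ?thesis by (simp only: distrib_right sum_distrib_right[symmetric])
  qed
  also have "ennreal (\<Sum>i\<le>l. mu j * p A j (int i)) + ennreal (mu j * p A j (-1))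
      = ennreal ((\<Sum>i\<le>l. mu j * p A j (int i)) + mu j * p A j (-1))"
    using serve_nonneg reject_nonneg by (intro ennreal_plus[symmetric] sum_nonneg) auto
  also have "(\<Sum>i\<le>l. mu j * p A j (int i)) + mu j * p A j (-1) = mu j"
    using admissible_sum_eq_1[OF assms(3-5)] by (simp add: sum_distrib_left[symmetric] distrib_left[symmetric] add.commute)
  finally show ?thesis .
qed

lemma transition_value_le_acr:
  assumes "flexible_dominates F" "agent_gain_bounded T F" "p \<in> admissible l" "length A = Suc l"
  shows "transition_value p T F A u \<le> transition_value acr T F A u"
  unfolding transition_value_split using job_value_le_acr[OF assms] assms(4)
  by (intro add_mono order_refl sum_mono) (simp add: job_value_acr)

lemma acr_job_value_flexible_dominates:
  assumes PA: "flexible_dominates F" and PB: "agent_gain_bounded T F"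
    and C: "length C = Suc l" and j: "1 \<le> j" "j \<le> l" and k: "k \<le> l"
  shows "acr_job_value T F (add_agent C j) k u \<le> acr_job_value T F (add_agent C 0) k u"
proof -
  let ?c = "in_horizon T u"
  have lengths: "length (add_agent C j) = Suc l" "length (add_agent C 0) = Suc l"
    using C by simp_all
  have flexible_served: "?c + F C u \<le> acr_job_value T F (add_agent C 0) k u"
    using acr_job_value_ge_serve[OF PA lengths(2) k, of 0] C by (simp add: nth_add_agent remove_add_agent)
  from lengths(1) k show ?thesis
  proof (cases rule: acr_job_value_cases[where T=T and F=F and u=u])
    case (1 i)
    show ?thesis
    proof (cases "i = j")
      case True
      then show ?thesis using 1(3) flexible_served C j by (simp add: remove_add_agent)
    next
      case False
      then have "0 < C ! i" "i \<le> l" using 1 C j k by (auto simp: nth_add_agent)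
      have "acr_job_value T F (add_agent C j) k u = ?c + F (add_agent (remove_agent C i) j) u"
        using 1(3) \<open>0 < C ! i\<close> \<open>i \<le> l\<close> C j by (simp add: remove_add_agent_commute)
      also have "\<dots> \<le> ?c + F (add_agent (remove_agent C i) 0) u"
        using flexible_dominatesD[OF PA _ j, of "remove_agent C i" u] C by (simp add: add_left_mono)
      also have "\<dots> = ?c + F (remove_agent (add_agent C 0) i) u"
        using \<open>0 < C ! i\<close> \<open>i \<le> l\<close> C by (simp add: remove_add_agent_commute)
      also have "\<dots> \<le> acr_job_value T F (add_agent C 0) k u"
        using acr_job_value_ge_serve[OF PA lengths(2) k \<open>i \<in> {0, k}\<close>] \<open>0 < C ! i\<close> C
        by (simp add: nth_add_agent)
      finally show ?thesis .
    qed
  next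
    case 2
    have "F (add_agent C j) u \<le> ?c + F C u"
      using agent_gain_boundedD[OF PB C j(2), of u] by (simp add: add.commute)
    then show ?thesis
      using 2(3) flexible_served by simp
  qed
qed

lemma acr_job_value_agent_gain_bounded:
  assumes PA: "flexible_dominates F" and PB: "agent_gain_bounded T F"
    and C: "length C = Suc l" and i: "i \<le> l" and k: "k \<le> l"
  shows "acr_job_value T F (add_agent C i) k u \<le> acr_job_value T F C k u + in_horizon T u"
proof -
  let ?c = "in_horizon T u"
  have rejected: "F C u \<le> acr_job_value T F C k u"
    by (rule acr_job_value_ge_reject[OF PB C k])
  have "length (add_agent C i) = Suc l" using C by simp
  from this k show ?thesis
  proof (cases rule: acr_job_value_cases[where T=T and F=F and u=u])
    case (1 m)
    show ?thesis
    proof (cases "m = i")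
      case True
      then have "acr_job_value T F (add_agent C i) k u = F C u + ?c"
        using 1(3) C i by (simp add: remove_add_agent add.commute)
      then show ?thesis using rejected by (simp add: add_right_mono)
    next
      case False
      then have "0 < C ! m" "m \<le> l" using 1 C i k by (auto simp: nth_add_agent)
      have "acr_job_value T F (add_agent C i) k u = ?c + F (add_agent (remove_agent C m) i) u"
        using 1(3) \<open>0 < C ! m\<close> \<open>m \<le> l\<close> C i by (simp add: remove_add_agent_commute)
      also have "\<dots> \<le> ?c + (F (remove_agent C m) u + ?c)"
        using agent_gain_boundedD[OF PB _ i, of "remove_agent C m" u] C by (simp add: add_left_mono)
      also have "\<dots> = (?c + F (remove_agent C m) u) + ?c"
        by (simp add: add.assoc)
      also have "\<dots> \<le> acr_job_value T F C k u + ?c"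
        using acr_job_value_ge_serve[OF PA C k \<open>m \<in> {0, k}\<close> \<open>0 < C ! m\<close>] by (rule add_right_mono)
      finally show ?thesis .
    qed
  next
    case 2
    have "F (add_agent C i) u \<le> F C u + ?c"
      by (rule agent_gain_boundedD[OF PB C i])
    also have "\<dots> \<le> acr_job_value T F C k u + ?c"
      using rejected by (rule add_right_mono)
    finally show ?thesis using 2(3) by simp
  qed
qed

lemma rate_add_agent:
  assumes "length C = Suc l" "i \<le> l"
  shows "rate (add_agent C i) = rate C + \<theta>"
proof -
  have "(\<Sum>k\<le>l. real (add_agent C i ! k)) = (\<Sum>k\<le>l. real (C ! k) + (if k = i then 1 else 0))"
    using assms by (intro sum.cong refl) (auto simp: nth_add_agent)
  then show ?thesis
    using assms(2) by (simp add: total_rate_def sum.distrib algebra_simps)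
qed

lemma ennreal_rate:
  "ennreal (rate C) = (\<Sum>k\<le>l. ennreal (lam k)) + (\<Sum>k\<le>l. ennreal (\<theta> * real (C ! k))) + (\<Sum>j\<le>l. ennreal (mu j))"
proof -
  have "(\<Sum>k\<le>l. ennreal (lam k)) = ennreal (\<Sum>k\<le>l. lam k)"
    and "(\<Sum>j\<le>l. ennreal (mu j)) = ennreal (\<Sum>j\<le>l. mu j)"
    and "(\<Sum>k\<le>l. ennreal (\<theta> * real (C ! k))) = ennreal (\<theta> * (\<Sum>k\<le>l. real (C ! k)))"
    using lam_pos mu_pos theta_pos by (auto intro!: sum_ennreal less_imp_le simp: sum_distrib_left)
  moreover have "0 \<le> (\<Sum>k\<le>l. lam k)" "0 \<le> (\<Sum>j\<le>l. mu j)" "0 \<le> \<theta> * (\<Sum>k\<le>l. real (C ! k))"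
    using lam_pos mu_pos theta_pos by (auto intro!: sum_nonneg mult_nonneg_nonneg intro: less_imp_le)
  ultimately show ?thesis
    by (simp add: total_rate_def ennreal_plus ac_simps)
qed

lemma arrival_value_add_agent:
  "arrival_value F (add_agent C i) u = (\<Sum>k\<le>l. ennreal (lam k) * F (add_agent (add_agent C k) i) u)"
  unfolding arrival_value_def by (simp add: add_agent_commute[of C i])

lemma abandonment_term_add_agent:
  assumes "length C = Suc l" "i \<le> l" "k \<le> l"
  shows "ennreal (\<theta> * real (add_agent C i ! k)) * F (remove_agent (add_agent C i) k) u
       = ennreal (\<theta> * real (C ! k)) * F (add_agent (remove_agent C k) i) u
         + (if k = i then ennreal \<theta> * F C u else 0)"
proof -
  have "ennreal (\<theta> * real (add_agent C i ! k)) = ennreal (\<theta> * real (C ! k)) + (if k = i then ennreal \<theta> else 0)"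
    using assms theta_pos by (simp add: nth_add_agent distrib_left ennreal_plus)
  moreover have "ennreal (\<theta> * real (C ! k)) * F (remove_agent (add_agent C i) k) u
      = ennreal (\<theta> * real (C ! k)) * F (add_agent (remove_agent C k) i) u"
    using assms by (cases "C ! k = 0") (simp_all add: remove_add_agent_commute)
  ultimately show ?thesis
    using assms by (simp add: distrib_right remove_add_agent)
qed

lemma abandonment_value_add_agent:
  assumes "length C = Suc l" "i \<le> l"
  shows "abandonment_value F (add_agent C i) u
       = (\<Sum>k\<le>l. ennreal (\<theta> * real (C ! k)) * F (add_agent (remove_agent C k) i) u) + ennreal \<theta> * F C u"
  unfolding abandonment_value_def using assms
  by (simp add: abandonment_term_add_agent sum.distrib sum.delta)

lemma transition_value_acr_flexible_dominates:
  assumes PA: "flexible_dominates F" and PB: "agent_gain_bounded T F"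
    and C: "length C = Suc l" and j: "1 \<le> j" "j \<le> l"
  shows "transition_value acr T F (add_agent C j) u \<le> transition_value acr T F (add_agent C 0) u"
proof -
  have "arrival_value F (add_agent C j) u \<le> arrival_value F (add_agent C 0) u"
    unfolding arrival_value_add_agent using flexible_dominatesD[OF PA _ j] C
    by (intro sum_mono mult_left_mono) auto
  moreover have "abandonment_value F (add_agent C j) u \<le> abandonment_value F (add_agent C 0) u"
    unfolding abandonment_value_add_agent[OF C j(2)] abandonment_value_add_agent[OF C le0]
    using flexible_dominatesD[OF PA _ j] C by (intro add_mono sum_mono mult_left_mono order_refl) auto
  moreover have "(\<Sum>k\<le>l. job_value acr T F (add_agent C j) k u) \<le> (\<Sum>k\<le>l. job_value acr T F (add_agent C 0) k u)"
    using acr_job_value_flexible_dominates[OF PA PB C j] C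
    by (intro sum_mono) (simp add: job_value_acr mult_left_mono)
  ultimately show ?thesis
    unfolding transition_value_split by (intro add_mono)
qed

lemma transition_value_acr_agent_gain_bounded:
  assumes PA: "flexible_dominates F" and PB: "agent_gain_bounded T F"
    and C: "length C = Suc l" and i: "i \<le> l"
  shows "transition_value acr T F (add_agent C i) u
       \<le> transition_value acr T F C u + ennreal (rate C) * in_horizon T u + ennreal \<theta> * F C u"
proof -
  let ?c = "in_horizon T u"
  have "arrival_value F (add_agent C i) u \<le> (\<Sum>k\<le>l. ennreal (lam k) * (F (add_agent C k) u + ?c))"
    unfolding arrival_value_add_agent using agent_gain_boundedD[OF PB _ i] C
    by (intro sum_mono mult_left_mono) auto
  also have "\<dots> = arrival_value F C u + (\<Sum>k\<le>l. ennreal (lam k)) * ?c"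
    by (simp add: arrival_value_def distrib_left sum.distrib sum_distrib_right)
  finally have arrival: "arrival_value F (add_agent C i) u \<le> \<dots>" .
  have "abandonment_value F (add_agent C i) u
      \<le> (\<Sum>k\<le>l. ennreal (\<theta> * real (C ! k)) * (F (remove_agent C k) u + ?c)) + ennreal \<theta> * F C u"
    unfolding abandonment_value_add_agent[OF C i] using agent_gain_boundedD[OF PB _ i] C
    by (intro add_mono sum_mono mult_left_mono order_refl) auto
  also have "\<dots> = abandonment_value F C u + (\<Sum>k\<le>l. ennreal (\<theta> * real (C ! k))) * ?c + ennreal \<theta> * F C u"
    by (simp add: abandonment_value_def distrib_left sum.distrib sum_distrib_right)
  finally have abandonment: "abandonment_value F (add_agent C i) u \<le> \<dots>" .
  have "(\<Sum>j\<le>l. job_value acr T F (add_agent C i) j u) \<le> (\<Sum>j\<le>l. ennreal (mu j) * (acr_job_value T F C j u + ?c))"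
    using acr_job_value_agent_gain_bounded[OF PA PB C i] C
    by (intro sum_mono) (simp add: job_value_acr mult_left_mono)
  also have "\<dots> = (\<Sum>j\<le>l. job_value acr T F C j u) + (\<Sum>j\<le>l. ennreal (mu j)) * ?c"
    using C by (simp add: job_value_acr distrib_left sum.distrib sum_distrib_right)
  finally have jobs: "(\<Sum>j\<le>l. job_value acr T F (add_agent C i) j u) \<le> \<dots>" .
  show ?thesis
    using add_mono[OF add_mono[OF arrival abandonment] jobs]
    unfolding transition_value_split ennreal_rate by (simp add: distrib_left distrib_right ac_simps)
qed

lemma bellman_acr_flexible_dominates:
  assumes "flexible_dominates F" "agent_gain_bounded T F" "length C = Suc l" "1 \<le> j" "j \<le> l"
  shows "bellman acr T F (add_agent C j) t \<le> bellman acr T F (add_agent C 0) t"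
  unfolding bellman_def rate_add_agent[OF assms(3,5)] rate_add_agent[OF assms(3) le0]
  using transition_value_acr_flexible_dominates[OF assms] by (intro nn_integral_mono mult_left_mono) auto

text \<open>The extra agent raises the holding rate by \<open>\<theta>\<close>; uniformization compares both states
  at the common rate \<open>rate C + \<theta>\<close>, the surplus rate of \<open>C\<close> being a self-loop.\<close>
lemma bellman_acr_agent_gain_bounded:
  assumes PA: "flexible_dominates F" and PB: "agent_gain_bounded T F"
    and C: "length C = Suc l" and i: "i \<le> l"
    and F_measurable: "\<And>B. F B \<in> borel_measurable borel"
    and F_le_bellman: "\<And>u. F C u \<le> bellman acr T F C u"
  shows "bellman acr T F (add_agent C i) t \<le> bellman acr T F C t + in_horizon T t"
proof -
  let ?r = "rate C" and ?H = "transition_value acr T F C" and ?c = "in_horizon T"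
  note [measurable] = borel_measurable_transition_value[OF F_measurable] borel_measurable_bellman[OF F_measurable]
  have "ennreal (exp_decay (?r + \<theta>) \<tau>) * transition_value acr T F (add_agent C i) (t + \<tau>)
      \<le> ennreal (exp_decay (?r + \<theta>) \<tau>) * (?H (t + \<tau>) + ennreal \<theta> * bellman acr T F C (t + \<tau>))
        + ennreal (exp_decay (?r + \<theta>) \<tau>) * (ennreal ?r * ?c (t + \<tau>))" for \<tau>
  proof -
    have "transition_value acr T F (add_agent C i) (t + \<tau>)
        \<le> ?H (t + \<tau>) + ennreal ?r * ?c (t + \<tau>) + ennreal \<theta> * bellman acr T F C (t + \<tau>)"
      using transition_value_acr_agent_gain_bounded[OF PA PB C i, of "t + \<tau>"] F_le_bellman
      by (meson add_left_mono mult_left_mono order_trans zero_le)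
    then have "ennreal (exp_decay (?r + \<theta>) \<tau>) * transition_value acr T F (add_agent C i) (t + \<tau>)
        \<le> ennreal (exp_decay (?r + \<theta>) \<tau>) *
          (?H (t + \<tau>) + ennreal ?r * ?c (t + \<tau>) + ennreal \<theta> * bellman acr T F C (t + \<tau>))"
      by (rule mult_left_mono) simp
    then show ?thesis
      by (simp add: distrib_left ac_simps)
  qed
  then have "bellman acr T F (add_agent C i) t
      \<le> (\<integral>\<^sup>+\<tau>. ennreal (exp_decay (?r + \<theta>) \<tau>) * (?H (t + \<tau>) + ennreal \<theta> * bellman acr T F C (t + \<tau>)) \<partial>lborel)
        + (\<integral>\<^sup>+\<tau>. ennreal (exp_decay (?r + \<theta>) \<tau>) * (ennreal ?r * ?c (t + \<tau>)) \<partial>lborel)"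
    unfolding bellman_def[of acr T F "add_agent C i"] rate_add_agent[OF C i]
    by (subst nn_integral_add[symmetric]) (auto intro!: nn_integral_mono)
  also have "(\<integral>\<^sup>+\<tau>. ennreal (exp_decay (?r + \<theta>) \<tau>) * (?H (t + \<tau>) + ennreal \<theta> * bellman acr T F C (t + \<tau>)) \<partial>lborel)
      = bellman acr T F C t"
    unfolding bellman_def[of acr T F C] by (rule nn_integral_exp_decay_uniformization[OF theta_pos]) measurable
  also have "(\<integral>\<^sup>+\<tau>. ennreal (exp_decay (?r + \<theta>) \<tau>) * (ennreal ?r * ?c (t + \<tau>)) \<partial>lborel) \<le> ?c t"
    using rate_pos[of C] theta_pos by (intro nn_integral_exp_decay_in_horizon_le) auto
  finally show ?thesis by (simp add: add_left_mono)
qed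

lemma value_iter_acr_le_Suc: "length B = Suc l \<Longrightarrow> value_iter acr T n B t \<le> value_iter acr T (Suc n) B t"
proof (induction n arbitrary: B t)
  case (Suc n)
  then show ?case by (simp only: value_iter.simps) (rule bellman_mono)
qed simp

lemma value_iter_acr_structure:
  "flexible_dominates (value_iter acr T n) \<and> agent_gain_bounded T (value_iter acr T n)"
proof (induction n)
  case 0
  then show ?case by (simp add: flexible_dominates_def agent_gain_bounded_def)
next
  case (Suc n)
  then have PA: "flexible_dominates (value_iter acr T n)" and PB: "agent_gain_bounded T (value_iter acr T n)"
    by auto
  have "flexible_dominates (value_iter acr T (Suc n))"
    unfolding flexible_dominates_def value_iter.simps using bellman_acr_flexible_dominates[OF PA PB] by blast
  moreover have "agent_gain_bounded T (value_iter acr T (Suc n))"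
    unfolding agent_gain_bounded_def value_iter.simps
    using bellman_acr_agent_gain_bounded[OF PA PB _ _ borel_measurable_value_iter]
      value_iter_acr_le_Suc[of _ T n] by simp
  ultimately show ?case ..
qed

lemma value_iter_le_acr:
  assumes "p \<in> admissible l"
  shows "length A = Suc l \<Longrightarrow> value_iter p T n A t \<le> value_iter acr T n A t"
proof (induction n arbitrary: A t)
  case (Suc n)
  have "value_iter p T (Suc n) A t \<le> bellman p T (value_iter acr T n) A t"
    using Suc by (simp only: value_iter.simps) (rule bellman_mono)
  also have "\<dots> \<le> bellman acr T (value_iter acr T n) A t"
    unfolding bellman_def using transition_value_le_acr[OF _ _ assms Suc.prems] value_iter_acr_structure
    by (intro nn_integral_mono mult_left_mono) auto
  finally show ?case by simp
qed simp

lemma throughput_le_acr: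
  assumes "p \<in> admissible l" "length A0 = Suc l"
  shows "throughput l lam mu \<theta> p A0 \<le> throughput l lam mu \<theta> acr A0"
proof -
  have "expected_matches l lam mu \<theta> p A0 T \<le> expected_matches l lam mu \<theta> acr A0 T" for T
    unfolding expected_matches_eq_SUP_value_iter[OF assms] expected_matches_eq_SUP_value_iter[OF acr_admissible assms(2)]
    using value_iter_le_acr[OF assms] by (intro SUP_mono) auto
  then show ?thesis
    unfolding throughput_def by (intro Limsup_mono always_eventually allI divide_right_mono_ennreal)
qed

end

theorem proposition1:
  fixes l :: nat and lam mu :: "nat \<Rightarrow> real" and \<theta> :: real and A0 :: "nat list"
  assumes "\<And>i. i \<le> l \<Longrightarrow> 0 < lam i"
    and "\<And>j. j \<le> l \<Longrightarrow> 0 < mu j"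
    and "0 < \<theta>"
    and "length A0 = Suc l"
  shows "throughput l lam mu \<theta> acr A0 = (SUP \<pi>\<in>admissible l. throughput l lam mu \<theta> \<pi> A0)"
proof -
  interpret matching_model l lam mu \<theta>
    using assms(1-3) by unfold_locales
  show ?thesis
    using acr_admissible throughput_le_acr[OF _ assms(4)]
    by (intro antisym SUP_upper SUP_least) auto
qed

end
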